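(* The class of diamond-weakly modular graphs is closed under gated amalgamation: if $G$ is a gated amalgam of two diamond-weakly modular graphs $G_1$ and $G_2$, then $G$ is diamond-weakly modular.
   Context: All graphs are finite, simple and connected; $d$ is the shortest-path distance and $I(a,b)=\{w: d(a,w)+d(w,b)=d(a,b)\}$. For $S\subseteq V(G)$ and a vertex $y$, a vertex $x\in S$ is a gate of $y$ in $S$ if $x\in I(y,w)$ for all $w\in S$; $S$ (or the subgraph it induces) is gated if every vertex has a gate in $S$. A graph $G$ is a gated amalgam of $G_1$ and $G_2$ if $G_1,G_2$ are gated subgraphs of $G$ with $G_1\cup G_2=G$, $G_1\cap G_2\ne\emptyset$, and there are no edges between $G_1\setminus G_2$ and $G_2\setminus G_1$ (equivalently, $G$ is obtained from $G_1$ and $G_2$ by identifying isomorphic gated subgraphs $H_1\subseteq G_1$, $H_2\subseteq G_2$). Quadrangle condition $(QC)$: for any four vertices $u,v,w,y$ with $d(v,y)=d(w,y)=1$ and $2=d(v,w)\le d(u,v)=d(u,w)=d(u,y)-1$, there exists a common neighbor $z$ of $v$ and $w$ with $d(u,z)=d(u,v)-1$. Triangle diamond condition $(TDC)$: for any three vertices $u,v,w$ with $1=d(v,w)<d(u,v)=d(u,w)$, there exists a common neighbor $z$ of $v$ and $w$ with $d(u,z)=d(u,v)-1$ such that $z$ is adjacent to every vertex $x$ with $d(x,v)=1$, $d(u,x)=d(u,v)-1$ and to every vertex $y$ with $d(y,w)=1$, $d(u,y)=d(u,w)-1$ (diamonds being $K_4$ minus an edge). A graph is diamond-weakly modular if it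 satisfies $(QC)$ and $(TDC)$. *)

theory Defs
  imports Main
begin

definition is_walk :: "'a set \<Rightarrow> ('a \<Rightarrow> 'a \<Rightarrow> bool) \<Rightarrow> 'a list \<Rightarrow> bool" where
  "is_walk V E xs \<longleftrightarrow> xs \<noteq> [] \<and> set xs \<subseteq> V \<and>
     (\<forall>i. Suc i < length xs \<longrightarrow> E (xs ! i) (xs ! Suc i))"

definition connected_graph :: "'a set \<Rightarrow> ('a \<Rightarrow> 'a \<Rightarrow> bool) \<Rightarrow> bool" where
  "connected_graph V E \<longleftrightarrow>
     (\<forall>u\<in>V. \<forall>v\<in>V. \<exists>xs. is_walk V E xs \<and> hd xs = u \<and> last xs = v)"

definition fsc_graph :: "'a set \<Rightarrow> ('a \<Rightarrow> 'a \<Rightarrow> bool) \<Rightarrow> bool" where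
  "fsc_graph V E \<longleftrightarrow> finite V \<and> V \<noteq> {} \<and>
     (\<forall>x y. E x y \<longrightarrow> x \<in> V \<and> y \<in> V) \<and>
     (\<forall>x y. E x y \<longrightarrow> E y x) \<and> (\<forall>x. \<not> E x x) \<and>
     connected_graph V E"

definition gdist :: "'a set \<Rightarrow> ('a \<Rightarrow> 'a \<Rightarrow> bool) \<Rightarrow> 'a \<Rightarrow> 'a \<Rightarrow> nat" where
  "gdist V E u v = (LEAST n. \<exists>xs. is_walk V E xs \<and> hd xs = u \<and> last xs = v \<and> length xs = Suc n)"

definition induced :: "('a \<Rightarrow> 'a \<Rightarrow> bool) \<Rightarrow> 'a set \<Rightarrow> 'a \<Rightarrow> 'a \<Rightarrow> bool" where
  "induced E S x y \<longleftrightarrow> E x y \<and> x \<in> S \<and> y \<in> S"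

definition interval :: "'a set \<Rightarrow> ('a \<Rightarrow> 'a \<Rightarrow> bool) \<Rightarrow> 'a \<Rightarrow> 'a \<Rightarrow> 'a set" where
  "interval V E a b = {w \<in> V. gdist V E a w + gdist V E w b = gdist V E a b}"

definition is_gate :: "'a set \<Rightarrow> ('a \<Rightarrow> 'a \<Rightarrow> bool) \<Rightarrow> 'a set \<Rightarrow> 'a \<Rightarrow> 'a \<Rightarrow> bool" where
  "is_gate V E S y x \<longleftrightarrow> x \<in> S \<and> (\<forall>w\<in>S. x \<in> interval V E y w)"

definition gated :: "'a set \<Rightarrow> ('a \<Rightarrow> 'a \<Rightarrow> bool) \<Rightarrow> 'a set \<Rightarrow> bool" where
  "gated V E S \<longleftrightarrow> S \<subseteq> V \<and> (\<forall>y\<in>V. \<exists>x. is_gate V E S y x)"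

definition gated_amalgam :: "'a set \<Rightarrow> ('a \<Rightarrow> 'a \<Rightarrow> bool) \<Rightarrow> 'a set \<Rightarrow> 'a set \<Rightarrow> bool" where
  "gated_amalgam V E V1 V2 \<longleftrightarrow> gated V E V1 \<and> gated V E V2 \<and> V1 \<union> V2 = V \<and>
     V1 \<inter> V2 \<noteq> {} \<and> (\<forall>x\<in>V1 - V2. \<forall>y\<in>V2 - V1. \<not> E x y)"

definition QC :: "'a set \<Rightarrow> ('a \<Rightarrow> 'a \<Rightarrow> bool) \<Rightarrow> bool" where
  "QC V E \<longleftrightarrow> (\<forall>u\<in>V. \<forall>v\<in>V. \<forall>w\<in>V. \<forall>y\<in>V.
     gdist V E v y = 1 \<and> gdist V E w y = 1 \<and> gdist V E v w = 2 \<and>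
     2 \<le> gdist V E u v \<and> gdist V E u v = gdist V E u w \<and> gdist V E u y = gdist V E u v + 1
     \<longrightarrow> (\<exists>z\<in>V. E z v \<and> E z w \<and> gdist V E u z + 1 = gdist V E u v))"

definition TDC :: "'a set \<Rightarrow> ('a \<Rightarrow> 'a \<Rightarrow> bool) \<Rightarrow> bool" where
  "TDC V E \<longleftrightarrow> (\<forall>u\<in>V. \<forall>v\<in>V. \<forall>w\<in>V.
     gdist V E v w = 1 \<and> 1 < gdist V E u v \<and> gdist V E u v = gdist V E u w
     \<longrightarrow> (\<exists>z\<in>V. E z v \<and> E z w \<and> gdist V E u z + 1 = gdist V E u v \<and>
          (\<forall>x\<in>V. gdist V E x v = 1 \<and> gdist V E u x + 1 = gdist V E u v \<and> x \<noteq> z \<longrightarrow> E z x) \<and>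
          (\<forall>y\<in>V. gdist V E y w = 1 \<and> gdist V E u y + 1 = gdist V E u w \<and> y \<noteq> z \<longrightarrow> E z y)))"

definition diamond_weakly_modular :: "'a set \<Rightarrow> ('a \<Rightarrow> 'a \<Rightarrow> bool) \<Rightarrow> bool" where
  "diamond_weakly_modular V E \<longleftrightarrow> fsc_graph V E \<and> QC V E \<and> TDC V E"

end

(* The gate g of a vertex u in a gated set S satisfies d u s = d u g + d g s for all s in S,
   and gated sets are convex, so distances inside G1 and G2 are those of G. Hence a QC or TDC
   configuration with base point u whose other vertices lie in a gated set S is, seen from g,
   a configuration of the same kind in S, unless g is already adjacent to v and w and is itself
   the required vertex. It remains to place every configuration on one side: a vertex outside S
   adjacent to v in S has v as its gate, so it is farther than v from every vertex of S. With u
   in G1, say, this and the absence of edges between G1 - G2 and G2 - G1 put v, w, y (and, for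
   TDC, every neighbour of v or w closer to u) all inside G1 or all inside G2. *)

theory Submission
  imports Defs
begin

lemma walk_iff_relpowp:
  assumes edges: "\<And>x y. E x y \<Longrightarrow> y \<in> V"
  shows "(\<exists>xs. is_walk V E xs \<and> hd xs = u \<and> last xs = v \<and> length xs = Suc n)
    \<longleftrightarrow> u \<in> V \<and> (E ^^ n) u v"
proof
  assume "\<exists>xs. is_walk V E xs \<and> hd xs = u \<and> last xs = v \<and> length xs = Suc n"
  then obtain xs where xs: "is_walk V E xs" "hd xs = u" "last xs = v" "length xs = Suc n"
    by blast
  then have "xs ! 0 = u" "xs ! n = v"
    by (auto simp: is_walk_def hd_conv_nth last_conv_nth)
  moreover have "E (xs ! i) (xs ! Suc i)" if "i < n" for i
    using xs(1,4) that by (simp add: is_walk_def)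
  ultimately have "(E ^^ n) u v"
    unfolding relpowp_fun_conv by (intro exI[of _ "(!) xs"]) blast
  moreover have "u \<in> V"
    using xs(1,2) by (auto simp: is_walk_def)
  ultimately show "u \<in> V \<and> (E ^^ n) u v" by blast
next
  assume "u \<in> V \<and> (E ^^ n) u v"
  then obtain f where f: "u \<in> V" "f 0 = u" "f n = v" "\<forall>i<n. E (f i) (f (Suc i))"
    unfolding relpowp_fun_conv by blast
  define xs where "xs = map f [0..<Suc n]"
  have "f i \<in> V" if "i \<le> n" for i
    using f(1,2,4) edges that by (cases i) (auto simp: Suc_le_eq)
  then have "is_walk V E xs"
    using f(4) by (auto simp: is_walk_def xs_def simp del: upt_Suc)
  moreover have "hd xs = u" "last xs = v" "length xs = Suc n"
    using f(2,3) by (simp_all add: xs_def hd_map last_map del: upt_Suc)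
  ultimately show "\<exists>xs. is_walk V E xs \<and> hd xs = u \<and> last xs = v \<and> length xs = Suc n"
    by blast
qed

lemma gdist_eq_Least:
  assumes "\<And>x y. E x y \<Longrightarrow> y \<in> V" and "u \<in> V"
  shows "gdist V E u v = (LEAST n. (E ^^ n) u v)"
  using assms by (simp add: gdist_def walk_iff_relpowp)

locale connected_simple_graph =
  fixes V :: "'a set" and E :: "'a \<Rightarrow> 'a \<Rightarrow> bool"
  assumes graph: "fsc_graph V E"
begin

abbreviation d :: "'a \<Rightarrow> 'a \<Rightarrow> nat" where
  "d \<equiv> gdist V E"

lemma edge_vertices: "E x y \<Longrightarrow> x \<in> V \<and> y \<in> V"
  using graph by (simp add: fsc_graph_def)

lemma edge_sym: "E x y \<Longrightarrow> E y x"
  using graph by (simp add: fsc_graph_def)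

lemma edge_irrefl: "\<not> E x x"
  using graph by (simp add: fsc_graph_def)

lemma dist_eq_Least: "u \<in> V \<Longrightarrow> d u v = (LEAST n. (E ^^ n) u v)"
  using gdist_eq_Least edge_vertices by metis

lemma relpowp_sym: "(E ^^ n) u v \<Longrightarrow> (E ^^ n) v u"
proof (induction n arbitrary: v)
  case (Suc n)
  then obtain y where "(E ^^ n) u y" "E y v"
    by (auto elim: relpowp_Suc_E)
  then show ?case
    using Suc.IH edge_sym relpowp_Suc_I2 by metis
qed simp

lemma relpowp_dist:
  assumes "u \<in> V" "v \<in> V"
  shows "(E ^^ d u v) u v"
proof -
  obtain xs where "is_walk V E xs" "hd xs = u" "last xs = v"
    using graph assms unfolding fsc_graph_def connected_graph_def by blast
  moreover from this have "length xs = Suc (length xs - 1)"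
    by (cases xs) (auto simp: is_walk_def)
  ultimately have "(E ^^ (length xs - 1)) u v"
    using walk_iff_relpowp[of E V] edge_vertices by metis
  then show ?thesis
    unfolding dist_eq_Least[OF assms(1)] by (rule LeastI)
qed

lemma dist_le: "u \<in> V \<Longrightarrow> (E ^^ n) u v \<Longrightarrow> d u v \<le> n"
  by (simp add: dist_eq_Least Least_le)

lemma dist_sym: "u \<in> V \<Longrightarrow> v \<in> V \<Longrightarrow> d u v = d v u"
  by (meson antisym dist_le relpowp_dist relpowp_sym)

lemma dist_triangle: "u \<in> V \<Longrightarrow> w \<in> V \<Longrightarrow> v \<in> V \<Longrightarrow> d u v \<le> d u w + d w v"
  by (meson dist_le relpowp_dist relpowp_trans)

lemma dist_eq_0_iff: "u \<in> V \<Longrightarrow> v \<in> V \<Longrightarrow> d u v = 0 \<longleftrightarrow> u = v"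
  by (metis dist_le relpowp_0_I relpowp_0_E relpowp_dist le_zero_eq)

lemma dist_eq_1_iff: "u \<in> V \<Longrightarrow> v \<in> V \<Longrightarrow> d u v = 1 \<longleftrightarrow> E u v"
  by (metis dist_eq_0_iff dist_le edge_irrefl le_antisym less_one not_le relpowp_1 relpowp_dist)

lemma gate_dist:
  assumes "gated V E S" "y \<in> V"
  obtains g where "g \<in> S" "\<And>s. s \<in> S \<Longrightarrow> d y s = d y g + d g s"
  using assms unfolding gated_def is_gate_def interval_def by force

lemma gated_convex:
  assumes "gated V E S" "a \<in> S" "b \<in> S" "p \<in> V" "d a p + d p b = d a b"
  shows "p \<in> S"
proof -
  obtain g where g: "g \<in> S" "\<And>s. s \<in> S \<Longrightarrow> d p s = d p g + d g s"
    using gate_dist[OF assms(1,4)] by blast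
  have V: "a \<in> V" "b \<in> V" "g \<in> V"
    using assms(1-3) g(1) by (auto simp: gated_def)
  have "d a b \<le> d a g + d g b"
    using dist_triangle V by blast
  then have "d p g = 0"
    using assms(4,5) g(2)[OF assms(2)] g(2)[OF assms(3)] dist_sym V by simp
  then show ?thesis
    using assms(4) dist_eq_0_iff V g(1) by blast
qed

lemma gate_of_outside_neighbour:
  assumes "gated V E S" "v \<in> S" "x \<in> V" "x \<notin> S" "E x v" "s \<in> S"
  shows "d x s = d v s + 1"
proof -
  obtain g where g: "g \<in> S" "\<And>s. s \<in> S \<Longrightarrow> d x s = d x g + d g s"
    using gate_dist[OF assms(1,3)] by blast
  have V: "v \<in> V" "g \<in> V"
    using assms(1,2) g(1) by (auto simp: gated_def)
  have "d x g + d g v = 1"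
    using g(2)[OF assms(2)] assms(3,5) V dist_eq_1_iff by metis
  moreover have "d x g \<noteq> 0"
    using assms(3,4) g(1) V dist_eq_0_iff by auto
  ultimately have "d x g = 1" "d g v = 0"
    by auto
  moreover from this(2) have "g = v"
    using V dist_eq_0_iff by auto
  ultimately show ?thesis
    using g(2)[OF assms(6)] by simp
qed

lemma neighbour_in_gated:
  assumes "gated V E S" "u \<in> S" "v \<in> S" "E x v" "d u x \<le> d u v"
  shows "x \<in> S"
proof (rule ccontr)
  assume "x \<notin> S"
  have V: "u \<in> V" "x \<in> V" "v \<in> V"
    using assms(1,2,4) edge_vertices by (auto simp: gated_def)
  have "d x u = d v u + 1"
    using gate_of_outside_neighbour[OF assms(1,3) V(2) \<open>x \<notin> S\<close> assms(4,2)] .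
  then show False
    using assms(5) dist_sym V by simp
qed

lemma geodesic_in_gated:
  assumes "gated V E S" "a \<in> S" "b \<in> S" "(E ^^ n) a b" "n = d a b"
  shows "(induced E S ^^ n) a b"
  using assms(2,4,5)
proof (induction n arbitrary: a)
  case (Suc n)
  from Suc.prems(2) obtain w where w: "E a w" "(E ^^ n) w b"
    by (rule relpowp_Suc_E2)
  have V: "a \<in> V" "w \<in> V" "b \<in> V"
    using assms(1,3) w(1) edge_vertices by (auto simp: gated_def)
  have "d w b \<le> n" "d a w = 1" "d a b \<le> d a w + d w b"
    using w V dist_le dist_eq_1_iff dist_triangle by auto
  then have "d w b = n" "d a w + d w b = d a b"
    using Suc.prems(3) by auto
  then have "w \<in> S"
    using gated_convex[OF assms(1) Suc.prems(1) assms(3) V(2)] by simp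
  then show ?case
    using Suc.IH[OF _ w(2)] Suc.prems(1) w(1) \<open>d w b = n\<close> relpowp_Suc_I2
    by (metis induced_def)
qed simp

lemma dist_induced_gated:
  assumes "gated V E S" "a \<in> S" "b \<in> S"
  shows "gdist S (induced E S) a b = d a b"
proof -
  have V: "a \<in> V" "b \<in> V"
    using assms by (auto simp: gated_def)
  have "gdist S (induced E S) a b = (LEAST n. (induced E S ^^ n) a b)"
    using gdist_eq_Least[of "induced E S" S] assms(2) by (simp add: induced_def)
  also have "\<dots> = d a b"
  proof (rule Least_equality)
    show "(induced E S ^^ d a b) a b"
      using geodesic_in_gated assms relpowp_dist V by blast
    show "d a b \<le> m" if "(induced E S ^^ m) a b" for m
      using that V(1) dist_le relpowp_mono[of "induced E S" E] by (metis induced_def)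
  qed
  finally show ?thesis .
qed

lemma QC_gated_subgraphD:
  assumes "gated V E S" "QC S (induced E S)" "u \<in> S" "v \<in> S" "w \<in> S" "y \<in> S"
    and "E v y" "E w y" "d v w = 2" "2 \<le> d u v" "d u v = d u w" "d u y = d u v + 1"
  obtains z where "z \<in> S" "E z v" "E z w" "d u z + 1 = d u v"
proof -
  note dist_S = dist_induced_gated[OF assms(1)]
  have "v \<in> V" "w \<in> V" "y \<in> V"
    using assms(1,4-6) by (auto simp: gated_def)
  then have "gdist S (induced E S) v y = 1 \<and> gdist S (induced E S) w y = 1 \<and>
      gdist S (induced E S) v w = 2 \<and> 2 \<le> gdist S (induced E S) u v \<and>
      gdist S (induced E S) u v = gdist S (induced E S) u w \<and>
      gdist S (induced E S) u y = gdist S (induced E S) u v + 1"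
    using assms(3-12) dist_S dist_eq_1_iff by simp
  then obtain z where "z \<in> S" "induced E S z v" "induced E S z w"
      "gdist S (induced E S) u z + 1 = gdist S (induced E S) u v"
    using assms(2)[unfolded QC_def, rule_format, OF assms(3-6)] by blast
  then show ?thesis
    using that dist_S assms(3,4) by (simp add: induced_def)
qed

lemma TDC_gated_subgraphD:
  assumes "gated V E S" "TDC S (induced E S)" "u \<in> S" "v \<in> S" "w \<in> S"
    and "E v w" "1 < d u v" "d u v = d u w"
  obtains z where "z \<in> S" "E z v" "E z w" "d u z + 1 = d u v"
    "\<And>x. x \<in> S \<Longrightarrow> E x v \<or> E x w \<Longrightarrow> d u x + 1 = d u v \<Longrightarrow> x \<noteq> z \<Longrightarrow> E z x"
proof -
  note dist_S = dist_induced_gated[OF assms(1)]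
  have "v \<in> V" "w \<in> V"
    using assms(1,4,5) by (auto simp: gated_def)
  then have "gdist S (induced E S) v w = 1 \<and> 1 < gdist S (induced E S) u v \<and>
      gdist S (induced E S) u v = gdist S (induced E S) u w"
    using assms(3-8) dist_S dist_eq_1_iff by simp
  then obtain z where z: "z \<in> S" "induced E S z v" "induced E S z w"
      "gdist S (induced E S) u z + 1 = gdist S (induced E S) u v"
      "\<forall>x\<in>S. gdist S (induced E S) x v = 1 \<and>
         gdist S (induced E S) u x + 1 = gdist S (induced E S) u v \<and> x \<noteq> z
         \<longrightarrow> induced E S z x"
      "\<forall>x\<in>S. gdist S (induced E S) x w = 1 \<and>
         gdist S (induced E S) u x + 1 = gdist S (induced E S) u w \<and> x \<noteq> z
         \<longrightarrow> induced E S z x"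
    using assms(2)[unfolded TDC_def, rule_format, OF assms(3-5)] by blast
  have "E z x" if "x \<in> S" "E x v \<or> E x w" "d u x + 1 = d u v" "x \<noteq> z" for x
  proof -
    have "x \<in> V"
      using assms(1) that(1) by (auto simp: gated_def)
    then show ?thesis
      using z(5,6) that dist_S assms(3-5,8) \<open>v \<in> V\<close> \<open>w \<in> V\<close> dist_eq_1_iff
      by (auto simp: induced_def)
  qed
  then show ?thesis
    using that z(1-4) dist_S assms(3,4) by (simp add: induced_def)
qed

lemma gate_of_equidistant_pair:
  assumes "gated V E S" "u \<in> V" "v \<in> S" "w \<in> S" "v \<noteq> w" "d u v = d u w"
  obtains g where "g \<in> S" "\<And>s. s \<in> S \<Longrightarrow> d u s = d u g + d g s"
    "d g v = d g w" "0 < d g v"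
proof -
  obtain g where g: "g \<in> S" "\<And>s. s \<in> S \<Longrightarrow> d u s = d u g + d g s"
    using gate_dist[OF assms(1,2)] by blast
  have "g \<in> V" "v \<in> V" "w \<in> V"
    using assms(1,3,4) g(1) by (auto simp: gated_def)
  moreover have "d g v = d g w"
    using g(2) assms(3,4,6) by force
  moreover have "d g v \<noteq> 0"
    using \<open>d g v = d g w\<close> assms(5) dist_eq_0_iff calculation by metis
  ultimately show ?thesis
    using that g by blast
qed

lemma QC_via_gate:
  assumes "gated V E S" "QC S (induced E S)" "u \<in> V" "v \<in> S" "w \<in> S" "y \<in> S"
    and "E v y" "E w y" "d v w = 2" "d u v = d u w" "d u y = d u v + 1"
  obtains z where "z \<in> V" "E z v" "E z w" "d u z + 1 = d u v"
proof -
  have "v \<in> V" "w \<in> V"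
    using assms(1,4,5) by (auto simp: gated_def)
  then have "v \<noteq> w"
    using assms(9) dist_eq_0_iff by force
  then obtain g where g: "g \<in> S" "\<And>s. s \<in> S \<Longrightarrow> d u s = d u g + d g s"
    "d g v = d g w" "0 < d g v"
    using gate_of_equidistant_pair[OF assms(1,3-5) _ assms(10)] by blast
  have "d g y = d g v + 1"
    using g(2) assms(4,6,11) by force
  consider "d g v = 1" | "2 \<le> d g v"
    using g(4) by linarith
  then show ?thesis
  proof cases
    case 1
    have "g \<in> V"
      using assms(1) g(1) by (auto simp: gated_def)
    then show ?thesis
      using that 1 g(2,3) assms(4) \<open>v \<in> V\<close> \<open>w \<in> V\<close> dist_eq_1_iff by auto
  next
    case 2
    with QC_gated_subgraphD[OF assms(1,2) g(1) assms(4-9) _ g(3) \<open>d g y = d g v + 1\<close>]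
    obtain z where "z \<in> S" "E z v" "E z w" "d g z + 1 = d g v"
      by blast
    then show ?thesis
      using that g(2)[of z] g(2)[OF assms(4)] assms(1) by (auto simp: gated_def)
  qed
qed

lemma TDC_via_gate:
  assumes "gated V E S" "TDC S (induced E S)" "u \<in> V" "v \<in> S" "w \<in> S"
    and "E v w" "1 < d u v" "d u v = d u w"
    and preds_in_S: "\<And>x. x \<in> V \<Longrightarrow> E x v \<or> E x w \<Longrightarrow> d u x + 1 = d u v \<Longrightarrow> x \<in> S"
  obtains z where "z \<in> V" "E z v" "E z w" "d u z + 1 = d u v"
    "\<And>x. x \<in> V \<Longrightarrow> E x v \<or> E x w \<Longrightarrow> d u x + 1 = d u v \<Longrightarrow> x \<noteq> z \<Longrightarrow> E z x"
proof -
  obtain g where g: "g \<in> S" "\<And>s. s \<in> S \<Longrightarrow> d u s = d u g + d g s"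
    "d g v = d g w" "0 < d g v"
    using gate_of_equidistant_pair[OF assms(1,3-5) _ assms(8)] assms(6) edge_irrefl by blast
  have V: "g \<in> V" "v \<in> V" "w \<in> V"
    using assms(1,4,5) g(1) by (auto simp: gated_def)
  have preds: "x \<in> S \<and> d g x + 1 = d g v"
    if "x \<in> V" "E x v \<or> E x w" "d u x + 1 = d u v" for x
    using preds_in_S[OF that] g(2) that(3) assms(4) by force
  consider "d g v = 1" | "1 < d g v"
    using g(4) by linarith
  then show ?thesis
  proof cases
    case 1
    have "x = g" if "x \<in> V" "E x v \<or> E x w" "d u x + 1 = d u v" for x
      using preds[OF that] 1 dist_eq_0_iff V(1) that(1) by simp
    moreover have "E g v" "E g w" "d u g + 1 = d u v"
      using 1 g(3) V dist_eq_1_iff g(2)[OF assms(4)] by auto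
    ultimately show ?thesis
      using that V(1) by blast
  next
    case 2
    with TDC_gated_subgraphD[OF assms(1,2) g(1) assms(4-6) _ g(3)]
    obtain z where z: "z \<in> S" "E z v" "E z w" "d g z + 1 = d g v"
      "\<And>x. x \<in> S \<Longrightarrow> E x v \<or> E x w \<Longrightarrow> d g x + 1 = d g v \<Longrightarrow> x \<noteq> z \<Longrightarrow> E z x"
      by blast
    have "d u z + 1 = d u v"
      using g(2)[OF z(1)] g(2)[OF assms(4)] z(4) by simp
    moreover have "z \<in> V"
      using assms(1) z(1) by (auto simp: gated_def)
    ultimately show ?thesis
      using that z(2,3,5) preds by blast
  qed
qed

end

locale gated_amalgam_graph = connected_simple_graph +
  fixes A B :: "'a set"
  assumes amalgam: "gated_amalgam V E A B"
begin

lemma gated_A: "gated V E A"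
  and gated_B: "gated V E B"
  and union: "A \<union> B = V"
  using amalgam by (simp_all add: gated_amalgam_def)

lemma swap: "gated_amalgam_graph V E B A"
  using graph amalgam edge_sym
  by unfold_locales (auto simp: gated_amalgam_def)

lemma edge_side: "E x y \<Longrightarrow> (x \<in> A \<and> y \<in> A) \<or> (x \<in> B \<and> y \<in> B)"
  using amalgam edge_vertices edge_sym unfolding gated_amalgam_def by blast

lemma QC_configuration_side:
  assumes "u \<in> A" "E v y" "E w y" "d u v = d u w" "d u y = d u v + 1"
  shows "(v \<in> A \<and> w \<in> A \<and> y \<in> A) \<or> (v \<in> B \<and> w \<in> B \<and> y \<in> B)"
proof (cases "y \<in> A")
  case True
  then have "v \<in> A" "w \<in> A"
    using neighbour_in_gated[OF gated_A assms(1) True] assms by simp_all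
  with True show ?thesis
    by blast
next
  case False
  then show ?thesis
    using edge_side[OF assms(2)] edge_side[OF assms(3)] by blast
qed

lemma TDC_configuration_side:
  assumes "u \<in> A" "E v w" "d u v = d u w"
  obtains S where "S = A \<or> S = B" "v \<in> S" "w \<in> S"
    "\<And>x. x \<in> V \<Longrightarrow> E x v \<or> E x w \<Longrightarrow> d u x + 1 = d u v \<Longrightarrow> x \<in> S"
proof (cases "v \<in> A \<and> w \<in> A")
  case True
  then show ?thesis
    using that[of A] neighbour_in_gated[OF gated_A assms(1)] assms(3) by force
next
  case False
  have "v \<notin> A" "w \<notin> A"
    using False neighbour_in_gated[OF gated_A assms(1)] assms(2,3) edge_sym by force+
  then show ?thesis
    using that[of B] edge_side edge_vertices assms(2) by blast
qed

lemma QC_at_vertex_of_A: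
  assumes "QC A (induced E A)" "QC B (induced E B)" "u \<in> A"
    and "E v y" "E w y" "d v w = 2" "d u v = d u w" "d u y = d u v + 1"
  obtains z where "z \<in> V" "E z v" "E z w" "d u z + 1 = d u v"
proof -
  have "u \<in> V"
    using assms(3) union by blast
  then show ?thesis
    using QC_configuration_side[OF assms(3-5,7,8)] that
      QC_via_gate[OF gated_A assms(1) _ _ _ _ assms(4-8)]
      QC_via_gate[OF gated_B assms(2) _ _ _ _ assms(4-8)]
    by blast
qed

lemma TDC_at_vertex_of_A:
  assumes "TDC A (induced E A)" "TDC B (induced E B)" "u \<in> A"
    and "E v w" "1 < d u v" "d u v = d u w"
  obtains z where "z \<in> V" "E z v" "E z w" "d u z + 1 = d u v"
    "\<And>x. x \<in> V \<Longrightarrow> E x v \<or> E x w \<Longrightarrow> d u x + 1 = d u v \<Longrightarrow> x \<noteq> z \<Longrightarrow> E z x"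
proof -
  obtain S where S: "S = A \<or> S = B" "v \<in> S" "w \<in> S"
    "\<And>x. x \<in> V \<Longrightarrow> E x v \<or> E x w \<Longrightarrow> d u x + 1 = d u v \<Longrightarrow> x \<in> S"
    using TDC_configuration_side[OF assms(3,4,6)] by blast
  have "gated V E S" "TDC S (induced E S)"
    using S(1) gated_A gated_B assms(1,2) by auto
  moreover have "u \<in> V"
    using assms(3) union by blast
  ultimately show ?thesis
    using TDC_via_gate[OF _ _ _ S(2,3) assms(4-6) S(4)] that by blast
qed

lemma QC_amalgam:
  assumes "QC A (induced E A)" "QC B (induced E B)"
  shows "QC V E"
  unfolding QC_def
proof (intro ballI impI)
  fix u v w y
  assume V: "u \<in> V" "v \<in> V" "w \<in> V" "y \<in> V"
    and h: "d v y = 1 \<and> d w y = 1 \<and> d v w = 2 \<and> 2 \<le> d u v \<and> d u v = d u w \<and>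
      d u y = d u v + 1"
  then have "E v y" "E w y"
    using dist_eq_1_iff by auto
  moreover have "u \<in> A \<or> u \<in> B"
    using V(1) union by blast
  ultimately show "\<exists>z\<in>V. E z v \<and> E z w \<and> d u z + 1 = d u v"
    using h QC_at_vertex_of_A[OF assms]
      gated_amalgam_graph.QC_at_vertex_of_A[OF swap assms(2,1)]
    by metis
qed

lemma TDC_amalgam:
  assumes "TDC A (induced E A)" "TDC B (induced E B)"
  shows "TDC V E"
  unfolding TDC_def
proof (intro ballI impI)
  fix u v w
  assume V: "u \<in> V" "v \<in> V" "w \<in> V"
    and h: "d v w = 1 \<and> 1 < d u v \<and> d u v = d u w"
  then have "E v w"
    using dist_eq_1_iff by auto
  obtain z where z: "z \<in> V" "E z v" "E z w" "d u z + 1 = d u v"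
    "\<And>x. x \<in> V \<Longrightarrow> E x v \<or> E x w \<Longrightarrow> d u x + 1 = d u v \<Longrightarrow> x \<noteq> z \<Longrightarrow> E z x"
  proof (cases "u \<in> A")
    case True
    then show ?thesis
      using TDC_at_vertex_of_A[OF assms _ \<open>E v w\<close>] h that by blast
  next
    case False
    then have "u \<in> B"
      using V(1) union by blast
    then show ?thesis
      using gated_amalgam_graph.TDC_at_vertex_of_A[OF swap assms(2,1) _ \<open>E v w\<close>] h that
      by blast
  qed
  then show "\<exists>z\<in>V. E z v \<and> E z w \<and> d u z + 1 = d u v \<and>
      (\<forall>x\<in>V. d x v = 1 \<and> d u x + 1 = d u v \<and> x \<noteq> z \<longrightarrow> E z x) \<and>
      (\<forall>y\<in>V. d y w = 1 \<and> d u y + 1 = d u w \<and> y \<noteq> z \<longrightarrow> E z y)"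
    using V h dist_eq_1_iff by metis
qed

end

theorem theorem2:
  fixes V V1 V2 :: "'a set" and E :: "'a \<Rightarrow> 'a \<Rightarrow> bool"
  assumes "fsc_graph V E"
    and "gated_amalgam V E V1 V2"
    and "diamond_weakly_modular V1 (induced E V1)"
    and "diamond_weakly_modular V2 (induced E V2)"
  shows "diamond_weakly_modular V E"
proof -
  interpret gated_amalgam_graph V E V1 V2
    using assms(1,2) by unfold_locales
  show ?thesis
    using assms QC_amalgam TDC_amalgam by (simp add: diamond_weakly_modular_def)
qed

end
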